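(* Let $\tau$ be a veering triangulation of $M$ with dual graph $\Gamma$. If two directed cycles $c_1,c_2$ in $\Gamma$ are freely homotopic in $M$, then the number of anti-branching turns of $c_1$ and the number of anti-branching turns of $c_2$ have the same parity.
   Context: $\tau$ is a veering triangulation of $M$ (taut ideal triangulation with cooriented faces, each tetrahedron having two bottom and two top faces, a bottom edge, a top edge and four side edges, angle sum $2\pi$ around edges, with a consistent right/left veer on edges modelled on a thickened rhombus whose side edges of positive slope are right-veering and of negative slope left-veering). The dual graph $\Gamma$ has a vertex in the interior of each tetrahedron and, for each face, a directed edge crossing that face from the tetrahedron for which it is a top face to the tetrahedron for which it is a bottom face; it is embedded in $M$. For a bottom face $f$ of a tetrahedron $t$, let $A(f)$ be the top face of $t$ meeting $f$ along the edge of $t$ whose veer equals that of the top edge of $t$. A directed cycle in $\Gamma$ passing through a tetrahedron $t$ enters through a bottom face $f$ and exits through a top face $f'$; this turn (at the vertex of $t$) is anti-branching if $f'=A(f)$ and branching otherwise. Turns are counted cyclically around the cycle. *)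

theory Defs
  imports Main "HOL-Combinatorics.Permutations"
begin

(* Each tetrahedron has vertex labels 0,1,2,3, chosen as in the rhombus
   picture seen from above (coorientation pointing to the viewer):
     0 = W, 1 = E   (bottom edge {0,1}),
     2 = S, 3 = N   (top edge {2,3}).
   Local face i of tetrahedron t = face opposite vertex i.
   Faces opposite 2,3 contain the bottom edge: bottom faces.
   Faces opposite 0,1 contain the top edge: top faces.
   gl t i = (t', s): face i of t is glued to face (s i) of t' by the
   vertex map s (restricted to the vertices of the face). *)

definition V4 :: "nat set" where "V4 = {0,1,2,3}"

type_synonym 't gluing = "'t \<Rightarrow> nat \<Rightarrow> 't \<times> (nat \<Rightarrow> nat)"

definition face_pairing :: "'t set \<Rightarrow> 't gluing \<Rightarrow> bool" where
  "face_pairing T gl \<longleftrightarrow>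
     (\<forall>t\<in>T. \<forall>i\<in>V4. fst (gl t i) \<in> T \<and> bij_betw (snd (gl t i)) V4 V4
        \<and> (fst (gl t i), snd (gl t i) i) \<noteq> (t, i)
        \<and> fst (gl (fst (gl t i)) (snd (gl t i) i)) = t
        \<and> (\<forall>a\<in>V4. snd (gl (fst (gl t i)) (snd (gl t i) i)) (snd (gl t i) a) = a))"

(* coorientation: every top face is glued to a bottom face and vice versa *)
definition taut_gluing :: "'t set \<Rightarrow> 't gluing \<Rightarrow> bool" where
  "taut_gluing T gl \<longleftrightarrow>
     (\<forall>t\<in>T. \<forall>i\<in>V4. (i \<in> {0,1} \<longleftrightarrow> snd (gl t i) i \<in> {2,3}))"

(* orientability with all tetrahedra consistently oriented by their labels:
   every gluing permutation is odd *)
definition oriented_gluing :: "'t set \<Rightarrow> 't gluing \<Rightarrow> bool" where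
  "oriented_gluing T gl \<longleftrightarrow>
     (\<forall>t\<in>T. \<forall>i\<in>V4. \<not> evenperm (\<lambda>a. if a \<in> V4 then snd (gl t i) a else a))"

(* identification of oriented edge slots (t,a,b) across glued faces *)
definition slot_step :: "'t set \<Rightarrow> 't gluing \<Rightarrow> 't \<times> nat \<times> nat \<Rightarrow> 't \<times> nat \<times> nat \<Rightarrow> bool" where
  "slot_step T gl x y \<longleftrightarrow>
     (case x of (t, a, b) \<Rightarrow> t \<in> T \<and> a \<in> V4 \<and> b \<in> V4 \<and> a \<noteq> b \<and>
        (\<exists>i\<in>V4. a \<noteq> i \<and> b \<noteq> i \<and>
            y = (fst (gl t i), snd (gl t i) a, snd (gl t i) b)))"

definition edge_equiv :: "'t set \<Rightarrow> 't gluing \<Rightarrow> 't \<times> nat \<times> nat \<Rightarrow> 't \<times> nat \<times> nat \<Rightarrow> bool" where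
  "edge_equiv T gl = (\<lambda>x y. slot_step T gl x y \<or> slot_step T gl y x)\<^sup>*\<^sup>*"

(* the quotient is a 3-manifold (after removing ideal vertices):
   no edge is identified with itself in reverse *)
definition manifold_gluing :: "'t set \<Rightarrow> 't gluing \<Rightarrow> bool" where
  "manifold_gluing T gl \<longleftrightarrow>
     (\<forall>t\<in>T. \<forall>a\<in>V4. \<forall>b\<in>V4. a \<noteq> b \<longrightarrow> \<not> edge_equiv T gl (t, a, b) (t, b, a))"

(* angle sum 2*pi around every edge: angle pi at top/bottom edges,
   0 at side edges, so exactly two pi-angles around each edge *)
definition angle_sum_2pi :: "'t set \<Rightarrow> 't gluing \<Rightarrow> bool" where
  "angle_sum_2pi T gl \<longleftrightarrow>
     (\<forall>t\<in>T. \<forall>a\<in>V4. \<forall>b\<in>V4. a \<noteq> b \<longrightarrow>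
        card {(t', a', b'). edge_equiv T gl (t, a, b) (t', a', b')
                \<and> ({a', b'} = {0, 1} \<or> {a', b'} = {2, 3})} = 2)"

(* veer: veer t {a,b} = True means the edge {a,b} of t is right-veering *)
definition veer_well_defined :: "'t set \<Rightarrow> 't gluing \<Rightarrow> ('t \<Rightarrow> nat set \<Rightarrow> bool) \<Rightarrow> bool" where
  "veer_well_defined T gl veer \<longleftrightarrow>
     (\<forall>t\<in>T. \<forall>i\<in>V4. \<forall>a\<in>V4. \<forall>b\<in>V4. a \<noteq> i \<and> b \<noteq> i \<and> a \<noteq> b \<longrightarrow>
        veer t {a, b} = veer (fst (gl t i)) {snd (gl t i) a, snd (gl t i) b})"

(* rhombus model: side edges of positive slope (W-N = {0,3}, E-S = {1,2})
   are right-veering, those of negative slope (N-E = {1,3}, S-W = {0,2})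
   are left-veering *)
definition veer_rhombus :: "'t set \<Rightarrow> ('t \<Rightarrow> nat set \<Rightarrow> bool) \<Rightarrow> bool" where
  "veer_rhombus T veer \<longleftrightarrow>
     (\<forall>t\<in>T. veer t {0, 3} \<and> veer t {1, 2} \<and> \<not> veer t {1, 3} \<and> \<not> veer t {0, 2})"

definition veering_triangulation :: "'t set \<Rightarrow> 't gluing \<Rightarrow> ('t \<Rightarrow> nat set \<Rightarrow> bool) \<Rightarrow> bool" where
  "veering_triangulation T gl veer \<longleftrightarrow>
     finite T \<and> face_pairing T gl \<and> taut_gluing T gl \<and> oriented_gluing T gl
     \<and> manifold_gluing T gl \<and> angle_sum_2pi T gl
     \<and> veer_well_defined T gl veer \<and> veer_rhombus T veer"

(* ---------- dual graph Gamma ----------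
   A directed edge of Gamma is a top face (t,i), i in {0,1}; it goes from t
   to the tetrahedron fst (gl t i), for which it is the bottom face snd (gl t i) i.
   A letter (f, True) traverses f forwards, (f, False) backwards. *)

definition dual_edge :: "'t set \<Rightarrow> 't \<times> nat \<Rightarrow> bool" where
  "dual_edge T f \<longleftrightarrow> fst f \<in> T \<and> snd f \<in> {0, 1}"

definition dsrc :: "'t gluing \<Rightarrow> ('t \<times> nat) \<times> bool \<Rightarrow> 't" where
  "dsrc gl x = (case x of ((t, i), b) \<Rightarrow> if b then t else fst (gl t i))"

definition dtgt :: "'t gluing \<Rightarrow> ('t \<times> nat) \<times> bool \<Rightarrow> 't" where
  "dtgt gl x = (case x of ((t, i), b) \<Rightarrow> if b then fst (gl t i) else t)"

definition dinv :: "('t \<times> nat) \<times> bool \<Rightarrow> ('t \<times> nat) \<times> bool" where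
  "dinv x = (fst x, \<not> snd x)"

fun walk :: "'t set \<Rightarrow> 't gluing \<Rightarrow> 't \<Rightarrow> (('t \<times> nat) \<times> bool) list \<Rightarrow> 't \<Rightarrow> bool" where
  "walk T gl v [] v' \<longleftrightarrow> v = v'"
| "walk T gl v (x # w) v' \<longleftrightarrow> dual_edge T (fst x) \<and> dsrc gl x = v \<and> walk T gl (dtgt gl x) w v'"

definition closed_walk :: "'t set \<Rightarrow> 't gluing \<Rightarrow> 't \<times> (('t \<times> nat) \<times> bool) list \<Rightarrow> bool" where
  "closed_walk T gl p \<longleftrightarrow> fst p \<in> T \<and> walk T gl (fst p) (snd p) (fst p)"

(* ---------- 2-cells of the dual complex (dual to the edges of tau) ----------
   State (t,a,b,c): in tetrahedron t at the edge slot {a,b}, about to leave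
   through face c (c not in {a,b}). *)

definition fourth :: "nat \<Rightarrow> nat \<Rightarrow> nat \<Rightarrow> nat" where
  "fourth a b c = (THE d. d \<in> V4 \<and> d \<notin> {a, b, c})"

definition around :: "'t gluing \<Rightarrow> 't \<times> nat \<times> nat \<times> nat \<Rightarrow> 't \<times> nat \<times> nat \<times> nat" where
  "around gl s = (case s of (t, a, b, c) \<Rightarrow>
      (fst (gl t c), snd (gl t c) a, snd (gl t c) b, snd (gl t c) (fourth a b c)))"

(* the letter of Gamma crossed when leaving t through face c *)
definition cross :: "'t gluing \<Rightarrow> 't \<times> nat \<times> nat \<times> nat \<Rightarrow> ('t \<times> nat) \<times> bool" where
  "cross gl s = (case s of (t, a, b, c) \<Rightarrow>
      (if c \<in> {0, 1} then ((t, c), True) else ((fst (gl t c), snd (gl t c) c), False)))"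

definition relator :: "'t set \<Rightarrow> 't gluing \<Rightarrow> (('t \<times> nat) \<times> bool) list \<Rightarrow> bool" where
  "relator T gl r \<longleftrightarrow>
     (\<exists>t a b c n. t \<in> T \<and> a \<in> V4 \<and> b \<in> V4 \<and> c \<in> V4 \<and> distinct [a, b, c] \<and> n \<ge> 1
        \<and> (around gl ^^ n) (t, a, b, c) = (t, a, b, c)
        \<and> r = map (\<lambda>k. cross gl ((around gl ^^ k) (t, a, b, c))) [0..<n])"

(* elementary moves of free homotopy of closed edge-loops in the dual
   2-complex (a spine onto which M deformation retracts) *)
definition hstep :: "'t set \<Rightarrow> 't gluing \<Rightarrow> 't \<times> (('t \<times> nat) \<times> bool) list
                     \<Rightarrow> 't \<times> (('t \<times> nat) \<times> bool) list \<Rightarrow> bool" where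
  "hstep T gl p q \<longleftrightarrow> closed_walk T gl p \<and> closed_walk T gl q \<and>
     ((\<exists>x u. snd p = x # u \<and> q = (dtgt gl x, u @ [x]))
      \<or> (\<exists>u z x. snd p = u @ z \<and> q = (fst p, u @ [x, dinv x] @ z))
      \<or> (\<exists>u z r. relator T gl r \<and> snd p = u @ z \<and> q = (fst p, u @ r @ z)))"

definition freely_homotopic :: "'t set \<Rightarrow> 't gluing \<Rightarrow> 't \<times> (('t \<times> nat) \<times> bool) list
                     \<Rightarrow> 't \<times> (('t \<times> nat) \<times> bool) list \<Rightarrow> bool" where
  "freely_homotopic T gl = (\<lambda>p q. hstep T gl p q \<or> hstep T gl q p)\<^sup>*\<^sup>*"

definition cycle_loop :: "('t \<times> nat) list \<Rightarrow> 't \<times> (('t \<times> nat) \<times> bool) list" where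
  "cycle_loop c = (fst (hd c), map (\<lambda>f. (f, True)) c)"

definition directed_cycle :: "'t set \<Rightarrow> 't gluing \<Rightarrow> ('t \<times> nat) list \<Rightarrow> bool" where
  "directed_cycle T gl c \<longleftrightarrow> c \<noteq> [] \<and> closed_walk T gl (cycle_loop c)"

(* A(f) for the bottom face j (j in {2,3}) of t: the top face i of t meeting
   face j along the edge V4 - {i,j} whose veer equals that of the top edge {2,3} *)
definition Aface :: "('t \<Rightarrow> nat set \<Rightarrow> bool) \<Rightarrow> 't \<Rightarrow> nat \<Rightarrow> nat" where
  "Aface veer t j = (THE i. i \<in> {0, 1} \<and> veer t (V4 - {i, j}) = veer t {2, 3})"

(* turn k: at the head of c!k, entering through the bottom face
   snd (gl t i) i and leaving through the top face of c!(k+1 mod n) *)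
definition anti_branching_turn :: "'t gluing \<Rightarrow> ('t \<Rightarrow> nat set \<Rightarrow> bool) \<Rightarrow> ('t \<times> nat) list \<Rightarrow> nat \<Rightarrow> bool" where
  "anti_branching_turn gl veer c k \<longleftrightarrow>
     (case c ! k of (t, i) \<Rightarrow>
        snd (c ! (Suc k mod length c)) = Aface veer (fst (gl t i)) (snd (gl t i) i))"

definition num_anti_branching :: "'t gluing \<Rightarrow> ('t \<Rightarrow> nat set \<Rightarrow> bool) \<Rightarrow> ('t \<times> nat) list \<Rightarrow> nat" where
  "num_anti_branching gl veer c = card {k. k < length c \<and> anti_branching_turn gl veer c k}"

end

theory Submission
  imports Defs
begin

(* Give each face f of tau the weight w(f) in Z/2 comparing the index (0 or 1) of f as a top face
   of the tetrahedron below it with the index of the top face A(f) of the tetrahedron above it.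
   A turn from f to f' is anti-branching iff f' = A(f), i.e. iff the indices of f' and A(f) agree;
   as the indices of the faces along a cycle are merely rotated, the number of anti-branching turns
   of a directed cycle has the parity of its total weight.
   The weight is a cocycle on the dual 2-complex: every edge slot of a tetrahedron carries a local
   orientation, and w(f) records whether crossing f reverses it. So w sums to zero around each edge
   of tau, and the total weight of a loop is invariant under free homotopy. *)

(* The edge {x, y} of the rhombus is determined by x + y: 1 is the bottom edge, 5 the top edge,
   3 a right-veering side edge, 2 or 4 a left-veering one. *)
definition model_veer :: "bool \<Rightarrow> bool \<Rightarrow> nat \<Rightarrow> nat \<Rightarrow> bool" where
  "model_veer vb vt x y = (if x + y = 1 then vb else if x + y = 5 then vt else x + y = 3)"

lemma veer_eq_model_veer:
  assumes "veer_rhombus T veer" "t \<in> T" "x \<in> V4" "y \<in> V4" "x \<noteq> y"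
  shows "veer t {x, y} = model_veer (veer t {0, 1}) (veer t {2, 3}) x y"
proof -
  have "veer t {0, 3}" "veer t {1, 2}" "\<not> veer t {1, 3}" "\<not> veer t {0, 2}"
    using assms(1,2) unfolding veer_rhombus_def by auto
  with assms(3-5) show ?thesis
    unfolding V4_def by (auto simp: model_veer_def insert_commute)
qed

definition perms_V4 :: "nat list list" where
  "perms_V4 = [[0,1,2,3],[0,1,3,2],[0,2,1,3],[0,2,3,1],[0,3,1,2],[0,3,2,1],
               [1,0,2,3],[1,0,3,2],[1,2,0,3],[1,2,3,0],[1,3,0,2],[1,3,2,0],
               [2,0,1,3],[2,0,3,1],[2,1,0,3],[2,1,3,0],[2,3,0,1],[2,3,1,0],
               [3,0,1,2],[3,0,2,1],[3,1,0,2],[3,1,2,0],[3,2,0,1],[3,2,1,0]]"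

lemma bij_V4_in_perms_V4:
  assumes "bij_betw s V4 V4"
  shows "[s 0, s 1, s 2, s 3] \<in> set perms_V4"
proof -
  have "s 0 \<in> V4" "s 1 \<in> V4" "s 2 \<in> V4" "s 3 \<in> V4"
    using bij_betw_apply[OF assms] unfolding V4_def by auto
  moreover have "inj_on s V4"
    using assms bij_betw_imp_inj_on by blast
  then have "s 0 \<noteq> s 1" "s 0 \<noteq> s 2" "s 0 \<noteq> s 3" "s 1 \<noteq> s 2" "s 1 \<noteq> s 3" "s 2 \<noteq> s 3"
    unfolding inj_on_def V4_def by (auto dest: spec[of _ 0] spec[of _ 1] spec[of _ 2] spec[of _ 3])
  ultimately show ?thesis
    unfolding perms_V4_def V4_def
    by (simp only: insert_iff empty_iff simp_thms) (elim disjE; simp)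
qed

lemma odd_perm_V4_not_double_transposition:
  assumes "\<not> evenperm (\<lambda>x. if x \<in> V4 then s x else x)"
  shows "[s 0, s 1, s 2, s 3] \<noteq> [2, 3, 0, 1]" "[s 0, s 1, s 2, s 3] \<noteq> [3, 2, 1, 0]"
proof -
  have not_product: "(\<lambda>x. if x \<in> V4 then s x else x) \<noteq> transpose 0 p \<circ> transpose 1 q"
    if "p \<in> {2, 3}" "q \<in> {2, 3}" for p q :: nat
    using assms that by (auto simp: evenperm_comp evenperm_swap permutation_swap_id)
  show "[s 0, s 1, s 2, s 3] \<noteq> [2, 3, 0, 1]"
    using not_product[of 2 3] by (auto simp: V4_def transpose_def fun_eq_iff split: if_splits)
  show "[s 0, s 1, s 2, s 3] \<noteq> [3, 2, 1, 0]"
    using not_product[of 3 2] by (auto simp: V4_def transpose_def fun_eq_iff split: if_splits)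
qed

(* Whether the oriented edge slot (a, b) points in the preferred direction: towards N for the top
   edge, otherwise towards E if the top edge veers right (vt) and towards W if it veers left. *)
definition slot_potential :: "nat \<Rightarrow> nat \<Rightarrow> bool \<Rightarrow> bool" where
  "slot_potential a b vt = (if a = 2 \<and> b = 3 then True else if a = 3 \<and> b = 2 then False
      else vt \<noteq> (a = 1 \<or> (a \<in> {2, 3} \<and> b = 0)))"

(* The left-hand side is the weight of the face along which face c of a tetrahedron is glued to
   face s c of its neighbour; checked over all 24 permutations s. *)
lemma slot_potential_cocycle:
  fixes s :: "nat \<Rightarrow> nat"
  assumes bij: "bij_betw s V4 V4" and odd: "\<not> evenperm (\<lambda>x. if x \<in> V4 then s x else x)"
    and abc: "a \<in> V4" "b \<in> V4" "c \<in> V4" "distinct [a, b, c]"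
    and taut: "c \<in> {0, 1} \<longleftrightarrow> s c \<in> {2, 3}"
    and veer: "\<And>x y. x \<in> V4 \<Longrightarrow> y \<in> V4 \<Longrightarrow> x \<noteq> y \<Longrightarrow> x \<noteq> c \<Longrightarrow> y \<noteq> c \<Longrightarrow>
                 model_veer vb vt x y = model_veer vb' vt' (s x) (s y)"
  shows "(if c \<in> {0, 1} then odd c \<longleftrightarrow> (vt' \<noteq> odd (s c)) else odd (s c) \<longleftrightarrow> (vt \<noteq> odd c))
         \<longleftrightarrow> slot_potential a b vt \<noteq> slot_potential (s a) (s b) vt'"
proof -
  have veer': "\<forall>x\<in>{0,1,2,3}. \<forall>y\<in>{0,1,2,3}. x \<noteq> y \<longrightarrow> x \<noteq> c \<longrightarrow> y \<noteq> c \<longrightarrow>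
      model_veer vb vt x y = model_veer vb' vt' (s x) (s y)"
    using veer unfolding V4_def by blast
  have abc': "a \<in> {0,1,2,3}" "b \<in> {0,1,2,3}" "c \<in> {0,1,2,3}" "a \<noteq> b" "a \<noteq> c" "b \<noteq> c"
    using abc unfolding V4_def by auto
  show ?thesis
    using bij_V4_in_perms_V4[OF bij] abc'(3) taut odd_perm_V4_not_double_transposition[OF odd]
    apply (simp add: perms_V4_def)
    apply (elim disjE conjE; simp)
    using abc'(1,2,4-6) veer'
    apply (simp_all add: model_veer_def slot_potential_def)
    apply (elim disjE; simp; fail)+
    done
qed

lemma fourth_spec:
  assumes "a \<in> V4" "b \<in> V4" "c \<in> V4" "distinct [a, b, c]"
  shows "fourth a b c \<in> V4 \<and> fourth a b c \<notin> {a, b, c}"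
  unfolding fourth_def
proof (rule theI')
  show "\<exists>!d. d \<in> V4 \<and> d \<notin> {a, b, c}"
  proof (rule ex1I[of _ "6 - a - b - c"])
    show "6 - a - b - c \<in> V4 \<and> 6 - a - b - c \<notin> {a, b, c}"
      using assms unfolding V4_def by auto
  next
    fix d assume "d \<in> V4 \<and> d \<notin> {a, b, c}"
    then show "d = 6 - a - b - c"
      using assms unfolding V4_def by auto
  qed
qed

definition edge_state :: "'t set \<Rightarrow> 't \<times> nat \<times> nat \<times> nat \<Rightarrow> bool" where
  "edge_state T s \<longleftrightarrow> (case s of (t, a, b, c) \<Rightarrow>
     t \<in> T \<and> a \<in> V4 \<and> b \<in> V4 \<and> c \<in> V4 \<and> distinct [a, b, c])"

lemma edge_state_around:
  assumes "face_pairing T gl" "edge_state T s"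
  shows "edge_state T (around gl s)"
proof -
  obtain t a b c where s: "s = (t, a, b, c)"
    by (cases s) auto
  with assms(2) have abc: "t \<in> T" "a \<in> V4" "b \<in> V4" "c \<in> V4" "distinct [a, b, c]"
    by (auto simp: edge_state_def)
  with assms(1) have "fst (gl t c) \<in> T" and bij: "bij_betw (snd (gl t c)) V4 V4"
    unfolding face_pairing_def by auto
  moreover note fourth_spec[OF abc(2-5)] bij_betw_apply[OF bij]
    inj_onD[OF bij_betw_imp_inj_on[OF bij]]
  ultimately show ?thesis
    using abc unfolding s around_def edge_state_def by auto
qed

lemma edge_state_funpow_around:
  assumes "face_pairing T gl" "edge_state T s"
  shows "edge_state T ((around gl ^^ k) s)"
  by (induction k) (auto simp: assms edge_state_around)

definition state_potential :: "('t \<Rightarrow> nat set \<Rightarrow> bool) \<Rightarrow> 't \<times> nat \<times> nat \<times> nat \<Rightarrow> bool" where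
  "state_potential veer s = (case s of (t, a, b, c) \<Rightarrow> slot_potential a b (veer t {2, 3}))"

definition Aface_parity :: "'t gluing \<Rightarrow> ('t \<Rightarrow> nat set \<Rightarrow> bool) \<Rightarrow> 't \<times> nat \<Rightarrow> bool" where
  "Aface_parity gl veer f = (case f of (t, i) \<Rightarrow> veer (fst (gl t i)) {2, 3} \<noteq> odd (snd (gl t i) i))"

definition face_weight :: "'t gluing \<Rightarrow> ('t \<Rightarrow> nat set \<Rightarrow> bool) \<Rightarrow> 't \<times> nat \<Rightarrow> bool" where
  "face_weight gl veer f \<longleftrightarrow> (odd (snd f) \<longleftrightarrow> Aface_parity gl veer f)"

definition loop_weight :: "'t gluing \<Rightarrow> ('t \<Rightarrow> nat set \<Rightarrow> bool) \<Rightarrow> (('t \<times> nat) \<times> bool) list \<Rightarrow> bool" where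
  "loop_weight gl veer w \<longleftrightarrow> odd (length (filter (\<lambda>x. face_weight gl veer (fst x)) w))"

lemma face_weight_cross:
  assumes vt: "veering_triangulation T gl veer" and s: "edge_state T s"
  shows "face_weight gl veer (fst (cross gl s))
    \<longleftrightarrow> state_potential veer s \<noteq> state_potential veer (around gl s)"
proof -
  obtain t a b c where s_eq: "s = (t, a, b, c)"
    by (cases s) auto
  with s have abc: "t \<in> T" "a \<in> V4" "b \<in> V4" "c \<in> V4" "distinct [a, b, c]"
    by (auto simp: edge_state_def)
  have fp: "face_pairing T gl" and tg: "taut_gluing T gl" and og: "oriented_gluing T gl"
    and vw: "veer_well_defined T gl veer" and vr: "veer_rhombus T veer"
    using vt unfolding veering_triangulation_def by auto
  define t' where "t' = fst (gl t c)"
  define \<sigma> where "\<sigma> = snd (gl t c)"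
  have t': "t' \<in> T" and bij: "bij_betw \<sigma> V4 V4"
    and glued_back: "fst (gl t' (\<sigma> c)) = t" "snd (gl t' (\<sigma> c)) (\<sigma> c) = c"
    using fp abc unfolding face_pairing_def t'_def \<sigma>_def by auto
  have odd: "\<not> evenperm (\<lambda>x. if x \<in> V4 then \<sigma> x else x)"
    using og abc unfolding oriented_gluing_def \<sigma>_def by auto
  have taut: "c \<in> {0, 1} \<longleftrightarrow> \<sigma> c \<in> {2, 3}"
    using tg abc unfolding taut_gluing_def \<sigma>_def by auto
  have veer: "model_veer (veer t {0, 1}) (veer t {2, 3}) x y
      = model_veer (veer t' {0, 1}) (veer t' {2, 3}) (\<sigma> x) (\<sigma> y)"
    if "x \<in> V4" "y \<in> V4" "x \<noteq> y" "x \<noteq> c" "y \<noteq> c" for x y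
  proof -
    have "\<sigma> x \<noteq> \<sigma> y"
      using inj_onD[OF bij_betw_imp_inj_on[OF bij]] that by blast
    moreover have "veer t {x, y} = veer t' {\<sigma> x, \<sigma> y}"
      using vw abc that unfolding veer_well_defined_def t'_def \<sigma>_def by blast
    ultimately show ?thesis
      using that veer_eq_model_veer[OF vr abc(1)] veer_eq_model_veer[OF vr t']
        bij_betw_apply[OF bij] by metis
  qed
  have "face_weight gl veer (fst (cross gl s)) \<longleftrightarrow>
     (if c \<in> {0, 1} then odd c \<longleftrightarrow> (veer t' {2, 3} \<noteq> odd (\<sigma> c))
      else odd (\<sigma> c) \<longleftrightarrow> (veer t {2, 3} \<noteq> odd c))"
    using glued_back unfolding s_eq cross_def face_weight_def Aface_parity_def t'_def \<sigma>_def by simp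
  also have "\<dots> \<longleftrightarrow> slot_potential a b (veer t {2, 3}) \<noteq> slot_potential (\<sigma> a) (\<sigma> b) (veer t' {2, 3})"
    using slot_potential_cocycle[OF bij odd abc(2-5) taut veer] .
  finally show ?thesis
    unfolding s_eq around_def state_potential_def t'_def \<sigma>_def by simp
qed

lemma loop_weight_Nil [simp]: "\<not> loop_weight gl veer []"
  by (simp add: loop_weight_def)

lemma loop_weight_append: "loop_weight gl veer (u @ w) \<longleftrightarrow> loop_weight gl veer u \<noteq> loop_weight gl veer w"
  by (simp add: loop_weight_def)

lemma loop_weight_around_orbit:
  assumes vt: "veering_triangulation T gl veer" and s: "edge_state T s"
  shows "loop_weight gl veer (map (\<lambda>k. cross gl ((around gl ^^ k) s)) [0..<n])
    \<longleftrightarrow> state_potential veer s \<noteq> state_potential veer ((around gl ^^ n) s)"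
proof (induction n)
  case (Suc n)
  have "face_pairing T gl"
    using vt unfolding veering_triangulation_def by auto
  then have "face_weight gl veer (fst (cross gl ((around gl ^^ n) s)))
      \<longleftrightarrow> state_potential veer ((around gl ^^ n) s) \<noteq> state_potential veer ((around gl ^^ Suc n) s)"
    using face_weight_cross[OF vt edge_state_funpow_around[OF _ s]] by simp
  with Suc show ?case
    by (auto simp: loop_weight_def)
qed simp

lemma loop_weight_relator:
  assumes "veering_triangulation T gl veer" "relator T gl r"
  shows "\<not> loop_weight gl veer r"
proof -
  obtain t a b c n where s: "edge_state T (t, a, b, c)"
    and closed: "(around gl ^^ n) (t, a, b, c) = (t, a, b, c)"
    and r: "r = map (\<lambda>k. cross gl ((around gl ^^ k) (t, a, b, c))) [0..<n]"
    using assms(2) unfolding relator_def edge_state_def by blast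
  show ?thesis
    using loop_weight_around_orbit[OF assms(1) s, of n] closed r by simp
qed

lemma loop_weight_hstep:
  assumes vt: "veering_triangulation T gl veer" and h: "hstep T gl p q"
  shows "loop_weight gl veer (snd p) \<longleftrightarrow> loop_weight gl veer (snd q)"
proof -
  from h consider
      (rotate) x u where "snd p = x # u" "q = (dtgt gl x, u @ [x])"
    | (spur) u w x where "snd p = u @ w" "q = (fst p, u @ [x, dinv x] @ w)"
    | (relator) u w r where "relator T gl r" "snd p = u @ w" "q = (fst p, u @ r @ w)"
    unfolding hstep_def by blast
  then show ?thesis
  proof cases
    case rotate
    then show ?thesis by (simp add: loop_weight_def)
  next
    case spur
    then show ?thesis by (simp add: loop_weight_def dinv_def)
  next
    case relator
    then show ?thesis using loop_weight_relator[OF vt] by (simp add: loop_weight_append)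
  qed
qed

lemma loop_weight_freely_homotopic:
  assumes vt: "veering_triangulation T gl veer" and "freely_homotopic T gl p q"
  shows "loop_weight gl veer (snd p) \<longleftrightarrow> loop_weight gl veer (snd q)"
  using assms(2) unfolding freely_homotopic_def
proof (induction rule: rtranclp_induct)
  case (step q q')
  then show ?case
    using loop_weight_hstep[OF vt, of q q'] loop_weight_hstep[OF vt, of q' q] by auto
qed simp

lemma walk_dual_edge: "walk T gl v w v' \<Longrightarrow> x \<in> set w \<Longrightarrow> dual_edge T (fst x)"
  by (induction w arbitrary: v) auto

lemma Aface_eq:
  assumes "veer_rhombus T veer" "t \<in> T" "j \<in> {2, 3}"
  shows "Aface veer t j = (if veer t {2, 3} \<noteq> odd j then 1 else 0)"
proof -
  have veers: "veer t {0, 3}" "veer t {1, 2}" "\<not> veer t {1, 3}" "\<not> veer t {0, 2}"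
    using assms(1,2) unfolding veer_rhombus_def by auto
  have sides: "V4 - {0, 2} = {1, 3}" "V4 - {1, 2} = {0, 3}" "V4 - {0, 3} = {1, 2}" "V4 - {1, 3} = {0, 2}"
    unfolding V4_def by auto
  have side_veers: "veer t (V4 - {i, j}) \<longleftrightarrow> (i = 1 \<longleftrightarrow> j = 2)" if "i \<in> {0, 1}" for i
  proof -
    from that assms(3) consider "i = 0" "j = 2" | "i = 1" "j = 2" | "i = 0" "j = 3" | "i = 1" "j = 3"
      by blast
    then show ?thesis
      using veers sides by cases simp_all
  qed
  define A :: nat where "A = (if veer t {2, 3} \<noteq> odd j then 1 else 0)"
  have A: "A \<in> {0, 1}"
    unfolding A_def by simp
  have matches_top: "(i = 1 \<longleftrightarrow> j = 2) \<longleftrightarrow> veer t {2, 3} \<longleftrightarrow> i = A" if "i \<in> {0, 1}" for i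
    using that assms(3) unfolding A_def by auto
  have "i \<in> {0, 1} \<and> veer t (V4 - {i, j}) = veer t {2, 3} \<longleftrightarrow> i = A" for i
  proof
    assume "i \<in> {0, 1} \<and> veer t (V4 - {i, j}) = veer t {2, 3}"
    then have "i \<in> {0, 1}" and "(i = 1 \<longleftrightarrow> j = 2) \<longleftrightarrow> veer t {2, 3}"
      using side_veers[of i] by auto
    then show "i = A"
      using matches_top by blast
  next
    assume "i = A"
    then show "i \<in> {0, 1} \<and> veer t (V4 - {i, j}) = veer t {2, 3}"
      using A side_veers[OF A] matches_top[OF A] by simp
  qed
  then show ?thesis
    unfolding Aface_def A_def[symmetric] by simp
qed

lemma directed_cycle_nth:
  assumes "directed_cycle T gl c" "m < length c"
  shows "fst (c ! m) \<in> T \<and> snd (c ! m) \<in> {0, 1}"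
proof -
  have "walk T gl (fst (hd c)) (map (\<lambda>f. (f, True)) c) (fst (hd c))"
    using assms(1) unfolding directed_cycle_def closed_walk_def cycle_loop_def by simp
  moreover have "(c ! m, True) \<in> set (map (\<lambda>f. (f, True)) c)"
    using assms(2) by auto
  ultimately show ?thesis
    using walk_dual_edge unfolding dual_edge_def by fastforce
qed

lemma anti_branching_turn_iff:
  assumes vt: "veering_triangulation T gl veer" and c: "directed_cycle T gl c"
    and k: "k < length c"
  shows "anti_branching_turn gl veer c k
    \<longleftrightarrow> (odd (snd (c ! (Suc k mod length c))) \<longleftrightarrow> Aface_parity gl veer (c ! k))"
proof -
  obtain t i where ti: "c ! k = (t, i)"
    by (cases "c ! k") auto
  with directed_cycle_nth[OF c k] vt have t': "fst (gl t i) \<in> T" and j: "snd (gl t i) i \<in> {2, 3}"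
    unfolding veering_triangulation_def face_pairing_def taut_gluing_def V4_def by auto
  have vr: "veer_rhombus T veer"
    using vt unfolding veering_triangulation_def by auto
  have "Suc k mod length c < length c"
    using k by (intro mod_less_divisor) auto
  then have "snd (c ! (Suc k mod length c)) \<in> {0, 1}"
    using directed_cycle_nth[OF c] by blast
  then show ?thesis
    by (auto simp: anti_branching_turn_def Aface_parity_def ti Aface_eq[OF vr t' j])
qed

lemma card_rotate: "card {k. k < n \<and> P (Suc k mod n)} = card {k. k < n \<and> P k}"
proof (rule bij_betw_same_card)
  show "bij_betw (\<lambda>k. Suc k mod n) {k. k < n \<and> P (Suc k mod n)} {k. k < n \<and> P k}"
    unfolding bij_betw_def
  proof
    show "inj_on (\<lambda>k. Suc k mod n) {k. k < n \<and> P (Suc k mod n)}"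
      by (auto simp: inj_on_def mod_Suc split: if_splits)
    show "(\<lambda>k. Suc k mod n) ` {k. k < n \<and> P (Suc k mod n)} = {k. k < n \<and> P k}"
    proof (intro equalityI subsetI)
      fix k assume "k \<in> {k. k < n \<and> P k}"
      then show "k \<in> (\<lambda>k. Suc k mod n) ` {k. k < n \<and> P (Suc k mod n)}"
        by (intro image_eqI[of _ _ "if k = 0 then n - 1 else k - 1"]) (auto simp: mod_Suc)
    qed auto
  qed
qed

lemma even_card_agreements:
  fixes x y :: "nat \<Rightarrow> bool"
  shows "even (card {k. k < n \<and> x k = y k}) \<longleftrightarrow> even (n + card {k. k < n \<and> x k} + card {k. k < n \<and> y k})"
proof (induction n)
  case (Suc n)
  have "card {k. k < Suc n \<and> P k} = card {k. k < n \<and> P k} + of_bool (P n)" for P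
  proof -
    have "{k. k < Suc n \<and> P k} = {k. k < n \<and> P k} \<union> (if P n then {n} else {})"
      by (auto simp: less_Suc_eq)
    then show ?thesis by simp
  qed
  with Suc show ?case by auto
qed simp

lemma even_card_rotated_agreements:
  fixes x y :: "nat \<Rightarrow> bool"
  shows "even (card {k. k < n \<and> x (Suc k mod n) = y k}) \<longleftrightarrow> even (card {k. k < n \<and> x k = y k})"
  using even_card_agreements[of n "\<lambda>k. x (Suc k mod n)" y] even_card_agreements[of n x y]
    card_rotate[of n x] by simp

lemma loop_weight_cycle_loop:
  assumes "veering_triangulation T gl veer" "directed_cycle T gl c"
  shows "loop_weight gl veer (snd (cycle_loop c)) \<longleftrightarrow> odd (num_anti_branching gl veer c)"
proof -
  define n where "n = length c"
  define x where "x k = odd (snd (c ! k))" for k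
  define y where "y k = Aface_parity gl veer (c ! k)" for k
  have "length (filter (\<lambda>x. face_weight gl veer (fst x)) (map (\<lambda>f. (f, True)) c))
      = card {k. k < n \<and> x k = y k}"
    unfolding filter_map length_map comp_def length_filter_conv_card n_def x_def y_def face_weight_def
    by simp
  moreover have "num_anti_branching gl veer c = card {k. k < n \<and> x (Suc k mod n) = y k}"
    unfolding num_anti_branching_def n_def x_def y_def
    using anti_branching_turn_iff[OF assms] by (intro arg_cong[of _ _ card]) blast
  ultimately show ?thesis
    unfolding loop_weight_def cycle_loop_def using even_card_rotated_agreements by simp
qed

theorem mainTheorem7:
  fixes T :: "'t set" and gl :: "'t gluing" and veer :: "'t \<Rightarrow> nat set \<Rightarrow> bool"
    and c1 c2 :: "('t \<times> nat) list"
  assumes "veering_triangulation T gl veer"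
    and "directed_cycle T gl c1" and "directed_cycle T gl c2"
    and "freely_homotopic T gl (cycle_loop c1) (cycle_loop c2)"
  shows "even (num_anti_branching gl veer c1) \<longleftrightarrow> even (num_anti_branching gl veer c2)"
  using loop_weight_freely_homotopic[OF assms(1,4)]
    loop_weight_cycle_loop[OF assms(1,2)] loop_weight_cycle_loop[OF assms(1,3)]
  by blast

end
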